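(* Let $G$ be a connected graph of order $n$ with diameter $d\ge 2$, and suppose $G$ is not isomorphic to the path $P_{d+1}$. Then $m_G[n-d+2,n]\le n-d$.
   Context: For a graph $G$ of order $n$, the Laplacian eigenvalues are the eigenvalues of the Laplacian matrix $L(G)=D(G)-A(G)$ (they lie in $[0,n]$), and for an interval $I\subseteq[0,n]$, $m_G I$ denotes the number of Laplacian eigenvalues of $G$ (counted with multiplicity) in $I$. $P_k$ is the path on $k$ vertices. *)

theory Defs
  imports "Jordan_Normal_Form.Char_Poly"
begin

definition simple_graph :: "nat \<Rightarrow> (nat \<Rightarrow> nat \<Rightarrow> bool) \<Rightarrow> bool" where
  "simple_graph n E \<longleftrightarrow> (\<forall>u v. E u v \<longrightarrow> u < n \<and> v < n \<and> u \<noteq> v \<and> E v u)"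

definition graph_connected :: "nat \<Rightarrow> (nat \<Rightarrow> nat \<Rightarrow> bool) \<Rightarrow> bool" where
  "graph_connected n E \<longleftrightarrow> (\<forall>u<n. \<forall>v<n. \<exists>k. (E ^^ k) u v)"

definition graph_dist :: "(nat \<Rightarrow> nat \<Rightarrow> bool) \<Rightarrow> nat \<Rightarrow> nat \<Rightarrow> nat" where
  "graph_dist E u v = (LEAST k. (E ^^ k) u v)"

definition diameter :: "nat \<Rightarrow> (nat \<Rightarrow> nat \<Rightarrow> bool) \<Rightarrow> nat" where
  "diameter n E = Max {graph_dist E u v | u v. u < n \<and> v < n}"

definition degree :: "nat \<Rightarrow> (nat \<Rightarrow> nat \<Rightarrow> bool) \<Rightarrow> nat \<Rightarrow> nat" where
  "degree n E u = card {w. w < n \<and> E u w}"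

definition laplacian :: "nat \<Rightarrow> (nat \<Rightarrow> nat \<Rightarrow> bool) \<Rightarrow> real mat" where
  "laplacian n E = mat n n (\<lambda>(i, j). if i = j then real (degree n E i)
                                     else if E i j then -1 else 0)"

definition lap_eig_count :: "nat \<Rightarrow> (nat \<Rightarrow> nat \<Rightarrow> bool) \<Rightarrow> real set \<Rightarrow> nat" where
  "lap_eig_count n E I =
     (\<Sum>x\<in>{x. poly (char_poly (laplacian n E)) x = 0 \<and> x \<in> I}.
        order x (char_poly (laplacian n E)))"

definition iso_to_path :: "nat \<Rightarrow> (nat \<Rightarrow> nat \<Rightarrow> bool) \<Rightarrow> nat \<Rightarrow> bool" where
  "iso_to_path n E k \<longleftrightarrow> (\<exists>f. bij_betw f {0..<n} {0..<k} \<and>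
      (\<forall>u<n. \<forall>v<n. E u v \<longleftrightarrow> (f u + 1 = f v \<or> f v + 1 = f u)))"

end

theory Submission
  imports Defs
begin

(* A diametral path v 0, ..., v d is a geodesic, hence an induced path, and as G is not this
   path there is a vertex w off it; w is adjacent to at most three consecutive path vertices
   v k, v (k + 1), v (k + 2). For x supported on the d path vertices other than v (k + 1), the
   Laplacian form x^T L x is below (n - d + 2) |x|^2: cutting the path at the zero of x leaves
   two paths, each with one end weighted twice by the edges to w, and their energy is less than
   4 |x|^2, while each of the other n - d - 2 vertices off the path contributes at most |x|^2.
   By the Courant-Fischer argument, based on an orthogonal diagonalisation of L, at most n - d
   eigenvalues are at least n - d + 2. *)

section \<open>Orthogonal diagonalisation of real symmetric matrices\<close>

lemma complex_eigenvalue_of_real_symmetric: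
  fixes A :: "real mat"
  assumes A: "A \<in> carrier_mat n n" and sym: "A\<^sup>T = A"
    and v: "v \<in> carrier_vec n" "v \<noteq> 0\<^sub>v n"
    and ev: "map_mat complex_of_real A *\<^sub>v v = c \<cdot>\<^sub>v v"
  shows "c \<in> \<real>"
proof -
  obtain i0 where i0: "i0 < n" "v $ i0 \<noteq> 0"
    using v by (metis eq_vecI carrier_vecD index_zero_vec)
  define r where "r = (\<Sum>i<n. cmod (v $ i) ^ 2)"
  have r: "r > 0" unfolding r_def by (rule sum_pos2[of _ i0]) (use i0 in auto)
  have Aij: "A $$ (i, j) = A $$ (j, i)" if "i < n" "j < n" for i j
    using that A arg_cong[OF sym, of "\<lambda>B. B $$ (j, i)"] by auto
  define s where "s = (\<Sum>i<n. \<Sum>j<n. cnj (v $ i) * of_real (A $$ (i, j)) * v $ j)"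
  have "s = (\<Sum>i<n. cnj (v $ i) * (map_mat complex_of_real A *\<^sub>v v) $ i)"
    unfolding s_def using A v
    by (intro sum.cong refl) (auto simp: scalar_prod_def sum_distrib_left atLeast0LessThan mult.assoc)
  also have "\<dots> = c * (\<Sum>i<n. cnj (v $ i) * v $ i)"
    unfolding ev sum_distrib_left using v by (intro sum.cong refl) auto
  also have "\<dots> = c * of_real r"
  proof -
    have "cnj z * z = of_real (cmod z ^ 2)" for z
      using complex_norm_square by (metis mult.commute)
    then show ?thesis unfolding r_def of_real_sum by simp
  qed
  finally have s_cr: "s = c * of_real r" .
  have "cnj s = (\<Sum>j<n. \<Sum>i<n. v $ i * of_real (A $$ (i, j)) * cnj (v $ j))"
    unfolding s_def cnj_sum by (subst sum.swap) simp
  also have "\<dots> = s"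
    unfolding s_def using Aij by (intro sum.cong refl) (simp add: mult.commute)
  finally have "cnj c * of_real r = c * of_real r" using s_cr by simp
  with r show ?thesis by (simp add: complex_eq_iff complex_is_Real_iff)
qed

lemma real_symmetric_char_poly_has_root:
  fixes A :: "real mat"
  assumes A: "A \<in> carrier_mat n n" and sym: "A\<^sup>T = A" and n: "0 < n"
  shows "\<exists>e. poly (char_poly A) e = 0"
proof -
  let ?Ac = "map_mat complex_of_real A"
  have Ac: "?Ac \<in> carrier_mat n n" using A by auto
  obtain as where "char_poly ?Ac = (\<Prod>a\<leftarrow>as. [:- a, 1:])" "length as = n"
    using char_poly_factorized[OF Ac] by auto
  with n obtain c where root: "poly (char_poly ?Ac) c = 0"
    by (cases as) auto
  then have "eigenvector ?Ac (find_eigenvector ?Ac c) c"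
    using find_eigenvector[OF Ac] eigenvalue_root_char_poly[OF Ac] by simp
  then obtain v where "v \<in> carrier_vec n" "v \<noteq> 0\<^sub>v n" "?Ac *\<^sub>v v = c \<cdot>\<^sub>v v"
    unfolding eigenvector_def using Ac by auto
  then have "c \<in> \<real>"
    by (rule complex_eigenvalue_of_real_symmetric[OF A sym])
  then have "complex_of_real (poly (char_poly A) (Re c)) = 0"
    using root of_real_hom.char_poly_hom[OF A] of_real_hom.poly_map_poly of_real_Re by metis
  then show ?thesis by auto
qed

lemma real_symmetric_unit_eigenvector:
  fixes A :: "real mat"
  assumes A: "A \<in> carrier_mat n n" and sym: "A\<^sup>T = A" and n: "0 < n"
  obtains e u where "u \<in> carrier_vec n" "u \<bullet> u = 1" "A *\<^sub>v u = e \<cdot>\<^sub>v u"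
proof -
  obtain e where "poly (char_poly A) e = 0"
    using real_symmetric_char_poly_has_root[OF A sym n] by auto
  then have "eigenvector A (find_eigenvector A e) e"
    using find_eigenvector[OF A] eigenvalue_root_char_poly[OF A] by simp
  then obtain v where v: "v \<in> carrier_vec n" "v \<noteq> 0\<^sub>v n" "A *\<^sub>v v = e \<cdot>\<^sub>v v"
    unfolding eigenvector_def using A by auto
  have "v \<bullet> v > 0" using conjugate_square_greater_0_vec[OF v(1)] v(2) by simp
  then show thesis
    using that[of "(1 / sqrt (v \<bullet> v)) \<cdot>\<^sub>v v" e] v A
    by (auto simp: smult_scalar_prod_distrib[of _ n] scalar_prod_smult_distrib[of _ n]
        mult_mat_vec[OF A] smult_smult_assoc mult.commute)
qed

definition householder :: "nat \<Rightarrow> real vec \<Rightarrow> real mat" where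
  "householder n w = mat n n (\<lambda>(i, j). of_bool (i = j) - 2 / (w \<bullet> w) * w $ i * w $ j)"

lemma householder_carrier: "householder n w \<in> carrier_mat n n"
  unfolding householder_def by simp

lemma transpose_householder: "(householder n w)\<^sup>T = householder n w"
  unfolding householder_def by (rule eq_matI) auto

lemma householder_involutive:
  assumes w: "w \<in> carrier_vec n"
  shows "householder n w * householder n w = 1\<^sub>m n"
proof (rule eq_matI)
  fix i j assume "i < dim_row (1\<^sub>m n)" "j < dim_col (1\<^sub>m n)"
  then have i: "i < n" and j: "j < n" by auto
  define c where "c = 2 / (w \<bullet> w)"
  define S where "S = (\<Sum>k = 0..<n. w $ k * w $ k)"
  have S: "w \<bullet> w = S" unfolding S_def scalar_prod_def using w by simp
  \<comment> \<open>also true, and needed, in the degenerate case \<open>w = 0\<close>, where \<open>c = 0\<close>\<close>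
  have cS: "c * c * S = 2 * c" unfolding c_def S by (cases "S = 0") (auto simp: field_simps)
  have "(householder n w * householder n w) $$ (i, j) =
      (\<Sum>k = 0..<n. (of_bool (i = k) - c * w $ i * w $ k) * (of_bool (k = j) - c * w $ k * w $ j))"
    using i j unfolding householder_def c_def by (auto simp: scalar_prod_def)
  also have "\<dots> = of_bool (i = j) - 2 * c * (w $ i * w $ j) + c * c * S * (w $ i * w $ j)"
    unfolding S_def using i j
    by (simp add: algebra_simps sum.distrib sum_subtractf sum_distrib_left of_bool_def
        if_distrib[of "\<lambda>x. x * _"] if_distrib[of "\<lambda>x. _ * x"] cong: if_cong)
  also have "\<dots> = 1\<^sub>m n $$ (i, j)"
    unfolding cS using i j by simp
  finally show "(householder n w * householder n w) $$ (i, j) = 1\<^sub>m n $$ (i, j)" .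
qed (auto simp: householder_def)

lemma col_householder_unit:
  assumes u: "u \<in> carrier_vec n" "u \<bullet> u = 1" and n: "0 < n"
  shows "col (householder n (u - unit_vec n 0)) 0 = u"
proof -
  define w where "w = u - unit_vec n 0"
  have w: "w \<in> carrier_vec n" "\<And>i. i < n \<Longrightarrow> w $ i = u $ i - of_bool (i = 0)"
    unfolding w_def using u by auto
  have "w \<bullet> w = (\<Sum>k = 0..<n. (u $ k - of_bool (k = 0)) * (u $ k - of_bool (k = 0)))"
    using w unfolding scalar_prod_def by simp
  also have "\<dots> = (\<Sum>k = 0..<n. u $ k * u $ k) - 2 * u $ 0 + 1"
    using n by (simp add: algebra_simps sum.distrib sum_subtractf of_bool_def
        if_distrib[of "\<lambda>x. x * _"] if_distrib[of "\<lambda>x. _ * x"] cong: if_cong)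
  also have "(\<Sum>k = 0..<n. u $ k * u $ k) = 1" using u unfolding scalar_prod_def by simp
  finally have ww: "w \<bullet> w = - 2 * w $ 0" using w n by simp
  show ?thesis unfolding w_def[symmetric]
  proof (rule eq_vecI)
    fix i assume "i < dim_vec u"
    then have i: "i < n" using u by simp
    have H: "col (householder n w) 0 $ i = of_bool (i = 0) - 2 / (w \<bullet> w) * w $ i * w $ 0"
      using i n unfolding householder_def by simp
    show "col (householder n w) 0 $ i = u $ i"
    proof (cases "w $ 0 = 0")
      case True
      then have "(\<Sum>k = 0..<n. w $ k * w $ k) = 0" using ww w(1) by (simp add: scalar_prod_def)
      then have "w $ i = 0" using i by (subst (asm) sum_nonneg_eq_0_iff) auto
      then show ?thesis unfolding H using True w(2)[OF i] by simp
    next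
      case False
      then show ?thesis unfolding H ww using w(2)[OF i] by (simp add: field_simps)
    qed
  qed (use u in \<open>simp add: householder_def\<close>)
qed

lemma symmetric_first_col_block:
  fixes B :: "'a :: comm_ring_1 mat"
  assumes B: "B \<in> carrier_mat (Suc m) (Suc m)" and sym: "B\<^sup>T = B"
    and col0: "col B 0 = e \<cdot>\<^sub>v unit_vec (Suc m) 0"
  defines "B' \<equiv> mat m m (\<lambda>(i, j). B $$ (Suc i, Suc j))"
  shows "B = four_block_mat (mat 1 1 (\<lambda>_. e)) (0\<^sub>m 1 m) (0\<^sub>m m 1) B'" (is "B = ?R")
    and "B'\<^sup>T = B'"
proof -
  have Bij: "B $$ (i, j) = B $$ (j, i)" if "i < Suc m" "j < Suc m" for i j
    using that B arg_cong[OF sym, of "\<lambda>C. C $$ (j, i)"] by auto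
  have Bi0: "B $$ (i, 0) = (if i = 0 then e else 0)" if "i < Suc m" for i
    using that B arg_cong[OF col0, of "\<lambda>v. v $ i"] by auto
  show "B = ?R"
  proof (rule eq_matI)
    fix i j assume "i < dim_row ?R" "j < dim_col ?R"
    then have "i < Suc m" "j < Suc m" by (auto simp: B'_def)
    then show "B $$ (i, j) = ?R $$ (i, j)"
      using Bi0 Bij[of 0] by (cases i; cases j) (auto simp: B'_def)
  qed (use B in \<open>auto simp: B'_def\<close>)
  show "B'\<^sup>T = B'"
    unfolding B'_def using Bij by (intro eq_matI) auto
qed

lemma real_symmetric_deflation:
  fixes A :: "real mat"
  assumes A: "A \<in> carrier_mat (Suc m) (Suc m)" and sym: "A\<^sup>T = A"
  obtains H e A' where "H \<in> carrier_mat (Suc m) (Suc m)" "H\<^sup>T * H = 1\<^sub>m (Suc m)"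
    "A' \<in> carrier_mat m m" "A'\<^sup>T = A'"
    "A = H * four_block_mat (mat 1 1 (\<lambda>_. e)) (0\<^sub>m 1 m) (0\<^sub>m m 1) A' * H\<^sup>T"
proof -
  let ?n = "Suc m"
  obtain e u where u: "u \<in> carrier_vec ?n" "u \<bullet> u = 1" "A *\<^sub>v u = e \<cdot>\<^sub>v u"
    using real_symmetric_unit_eigenvector[OF A sym] by blast
  define H where "H = householder ?n (u - unit_vec ?n 0)"
  have H: "H \<in> carrier_mat ?n ?n" "H\<^sup>T = H" "H * H = 1\<^sub>m ?n" "col H 0 = u"
    unfolding H_def using householder_carrier transpose_householder
      householder_involutive col_householder_unit[OF u(1,2)] u(1) by auto
  define B where "B = H * A * H"
  have B: "B \<in> carrier_mat ?n ?n" unfolding B_def using H A by auto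
  have Bsym: "B\<^sup>T = B" unfolding B_def using H A sym
    by (simp add: transpose_mult[of _ ?n ?n _ ?n] assoc_mult_mat[of _ ?n ?n _ ?n _ ?n])
  have col0: "col B 0 = e \<cdot>\<^sub>v unit_vec ?n 0"
  proof -
    have "col B 0 = (H * A) *\<^sub>v col H 0"
      unfolding B_def using H A by (intro col_mult2[of _ ?n ?n]) auto
    also have "\<dots> = H *\<^sub>v (A *\<^sub>v col H 0)"
      using H(1) A col_dim[of H 0] by (intro assoc_mult_mat_vec[of _ ?n ?n _ ?n]) auto
    also have "\<dots> = e \<cdot>\<^sub>v (H *\<^sub>v col H 0)"
      using H u by (simp add: mult_mat_vec[of _ ?n ?n])
    also have "H *\<^sub>v col H 0 = col (H * H) 0"
      using H(1) by (intro col_mult2[symmetric]) auto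
    finally show ?thesis using H(3) by simp
  qed
  have A_eq: "A = H * B * H\<^sup>T"
  proof -
    have "H * B * H\<^sup>T = (H * H) * A * (H * H)"
      unfolding B_def H(2) using H(1) A by (simp add: assoc_mult_mat[of _ ?n ?n _ ?n _ ?n])
    then show ?thesis using H(3) A by simp
  qed
  define A' where "A' = mat m m (\<lambda>(i, j). B $$ (Suc i, Suc j))"
  have "B = four_block_mat (mat 1 1 (\<lambda>_. e)) (0\<^sub>m 1 m) (0\<^sub>m m 1) A'" "A'\<^sup>T = A'"
    using symmetric_first_col_block[OF B Bsym col0] unfolding A'_def by auto
  moreover have "A' \<in> carrier_mat m m" unfolding A'_def by simp
  ultimately show thesis
    using that[of H A' e] H A_eq by auto
qed

definition orthogonally_diagonalizable :: "nat \<Rightarrow> 'a :: comm_ring_1 mat \<Rightarrow> bool" where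
  "orthogonally_diagonalizable n A \<longleftrightarrow> (\<exists>Q D. Q \<in> carrier_mat n n \<and> D \<in> carrier_mat n n \<and>
     diagonal_mat D \<and> Q\<^sup>T * Q = 1\<^sub>m n \<and> A = Q * D * Q\<^sup>T)"

lemma orthogonally_diagonalizable_conj:
  assumes H: "H \<in> carrier_mat n n" "H\<^sup>T * H = 1\<^sub>m n" and B: "orthogonally_diagonalizable n B"
  shows "orthogonally_diagonalizable n (H * B * H\<^sup>T)"
proof -
  obtain Q D where QD: "Q \<in> carrier_mat n n" "D \<in> carrier_mat n n" "diagonal_mat D"
      "Q\<^sup>T * Q = 1\<^sub>m n" "B = Q * D * Q\<^sup>T"
    using B unfolding orthogonally_diagonalizable_def by blast
  have "(H * Q)\<^sup>T * (H * Q) = Q\<^sup>T * (H\<^sup>T * H) * Q"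
    using H(1) QD(1) by (simp add: transpose_mult[of _ n n _ n] assoc_mult_mat[of _ n n _ n _ n])
  also have "\<dots> = 1\<^sub>m n" using H QD by simp
  finally have "(H * Q)\<^sup>T * (H * Q) = 1\<^sub>m n" .
  moreover have "H * B * H\<^sup>T = (H * Q) * D * (H * Q)\<^sup>T"
    using H QD by (simp add: transpose_mult[of _ n n _ n] assoc_mult_mat[of _ n n _ n _ n])
  ultimately show ?thesis
    unfolding orthogonally_diagonalizable_def using H QD by (intro exI[of _ "H * Q"] exI[of _ D]) auto
qed

lemma orthogonally_diagonalizable_four_block:
  assumes "orthogonally_diagonalizable m A"
  shows "orthogonally_diagonalizable (Suc m) (four_block_mat (mat 1 1 (\<lambda>_. e)) (0\<^sub>m 1 m) (0\<^sub>m m 1) A)"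
proof -
  obtain Q D where QD: "Q \<in> carrier_mat m m" "D \<in> carrier_mat m m" "diagonal_mat D"
      "Q\<^sup>T * Q = 1\<^sub>m m" "A = Q * D * Q\<^sup>T"
    using assms unfolding orthogonally_diagonalizable_def by blast
  define Q' where "Q' = four_block_mat (1\<^sub>m 1) (0\<^sub>m 1 m) (0\<^sub>m m 1) Q"
  define D' where "D' = four_block_mat (mat 1 1 (\<lambda>_. e)) (0\<^sub>m 1 m) (0\<^sub>m m 1) D"
  have Q'T: "Q'\<^sup>T = four_block_mat (1\<^sub>m 1) (0\<^sub>m 1 m) (0\<^sub>m m 1) Q\<^sup>T"
    unfolding Q'_def using QD by (subst transpose_four_block_mat) auto
  have "Q'\<^sup>T * Q' = 1\<^sub>m (Suc m)"
    unfolding Q'T unfolding Q'_def using QD by (subst mult_four_block_mat) auto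
  moreover have "four_block_mat (mat 1 1 (\<lambda>_. e)) (0\<^sub>m 1 m) (0\<^sub>m m 1) A = Q' * D' * Q'\<^sup>T"
    unfolding Q'T unfolding Q'_def D'_def QD(5) using QD
    by (subst mult_four_block_mat, auto, subst mult_four_block_mat, auto)
  moreover have "diagonal_mat D'"
    using QD(2,3) unfolding D'_def diagonal_mat_def by auto
  ultimately show ?thesis
    unfolding orthogonally_diagonalizable_def using QD
    by (intro exI[of _ Q'] exI[of _ D']) (auto simp: Q'_def D'_def)
qed

theorem real_symmetric_orthogonally_diagonalizable:
  fixes A :: "real mat"
  assumes "A \<in> carrier_mat n n" "A\<^sup>T = A"
  shows "orthogonally_diagonalizable n A"
  using assms
proof (induction n arbitrary: A)
  case 0
  then have "A = 1\<^sub>m 0 * A * (1\<^sub>m 0)\<^sup>T" "diagonal_mat A"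
    unfolding diagonal_mat_def by auto
  then show ?case
    unfolding orthogonally_diagonalizable_def using 0 by (intro exI[of _ "1\<^sub>m 0"] exI[of _ A]) auto
next
  case (Suc m)
  then obtain H e A' where "H \<in> carrier_mat (Suc m) (Suc m)" "H\<^sup>T * H = 1\<^sub>m (Suc m)"
      "A' \<in> carrier_mat m m" "A'\<^sup>T = A'"
      "A = H * four_block_mat (mat 1 1 (\<lambda>_. e)) (0\<^sub>m 1 m) (0\<^sub>m m 1) A' * H\<^sup>T"
    by (metis real_symmetric_deflation)
  then show ?case
    using Suc.IH orthogonally_diagonalizable_conj orthogonally_diagonalizable_four_block by metis
qed

section \<open>Counting eigenvalues by a quadratic form\<close>

lemma order_prod_linear_factors:
  fixes \<mu> :: "nat \<Rightarrow> 'a :: idom"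
  shows "Polynomial.order z (\<Prod>l\<leftarrow>[0..<n]. [:- \<mu> l, 1:]) = card {l. l < n \<and> \<mu> l = z}"
proof -
  have "Polynomial.order z (\<Prod>l\<leftarrow>[0..<n]. [:- \<mu> l, 1:]) =
      (\<Sum>l\<leftarrow>[0..<n]. if \<mu> l = z then 1 else 0)"
    by (subst order_prod_list) (auto simp: o_def order_linear')
  also have "\<dots> = card {l \<in> {0..<n}. \<mu> l = z}"
    by (simp add: interv_sum_list_conv_sum_set_nat sum.inter_filter[symmetric])
  also have "{l \<in> {0..<n}. \<mu> l = z} = {l. l < n \<and> \<mu> l = z}"
    by auto
  finally show ?thesis .
qed

lemma sum_order_roots_prod_linear_factors:
  fixes \<mu> :: "nat \<Rightarrow> 'a :: idom" and n :: nat
  defines "p \<equiv> \<Prod>l\<leftarrow>[0..<n]. [:- \<mu> l, 1:]"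
  shows "(\<Sum>z\<in>{z. poly p z = 0 \<and> z \<in> I}. Polynomial.order z p) = card {l. l < n \<and> \<mu> l \<in> I}"
proof -
  have roots: "{z. poly p z = 0 \<and> z \<in> I} = \<mu> ` {l. l < n \<and> \<mu> l \<in> I}"
    unfolding p_def poly_prod_list_zero_iff by auto
  have "(\<Sum>z\<in>{z. poly p z = 0 \<and> z \<in> I}. Polynomial.order z p) =
      (\<Sum>z\<in>\<mu> ` {l. l < n \<and> \<mu> l \<in> I}. card {l. l < n \<and> \<mu> l = z})"
    unfolding roots by (simp add: p_def order_prod_linear_factors)
  also have "\<dots> = card (\<Union>z\<in>\<mu> ` {l. l < n \<and> \<mu> l \<in> I}. {l. l < n \<and> \<mu> l = z})"
    by (rule card_UN_disjoint[symmetric]) auto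
  also have "(\<Union>z\<in>\<mu> ` {l. l < n \<and> \<mu> l \<in> I}. {l. l < n \<and> \<mu> l = z}) = {l. l < n \<and> \<mu> l \<in> I}"
    by auto
  finally show ?thesis .
qed

lemma char_poly_orth_diagonal:
  fixes Q D :: "'a :: field mat"
  assumes Q: "Q \<in> carrier_mat n n" "Q\<^sup>T * Q = 1\<^sub>m n" and D: "D \<in> carrier_mat n n" "diagonal_mat D"
  shows "char_poly (Q * D * Q\<^sup>T) = (\<Prod>l\<leftarrow>[0..<n]. [:- D $$ (l, l), 1:])"
proof -
  have "Q * Q\<^sup>T = 1\<^sub>m n"
    using mat_mult_left_right_inverse[of "Q\<^sup>T" n Q] Q by auto
  then have "similar_mat (Q * D * Q\<^sup>T) D"
    unfolding similar_mat_def
    by (intro exI[of _ Q] exI[of _ "Q\<^sup>T"] similar_mat_witI[of _ _ n]) (use Q D in auto)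
  then have "char_poly (Q * D * Q\<^sup>T) = char_poly D"
    by (rule char_poly_similar)
  moreover have "upper_triangular D"
    using D unfolding upper_triangular_def diagonal_mat_def by auto
  ultimately show ?thesis
    using char_poly_upper_triangular[OF D(1)] D(1) by (simp add: diag_mat_def o_def)
qed

lemma quadratic_form_mult_diagonal:
  fixes x :: "nat \<Rightarrow> 'a :: comm_ring_1"
  assumes Q: "Q \<in> carrier_mat n n" and D: "D \<in> carrier_mat n n" "diagonal_mat D"
  shows "(\<Sum>i = 0..<n. \<Sum>j = 0..<n. x i * (Q * D * Q\<^sup>T) $$ (i, j) * x j) =
    (\<Sum>l = 0..<n. D $$ (l, l) * (\<Sum>i = 0..<n. Q $$ (i, l) * x i)\<^sup>2)"
proof -
  have entry: "(Q * D * Q\<^sup>T) $$ (i, j) = (\<Sum>l = 0..<n. Q $$ (i, l) * D $$ (l, l) * Q $$ (j, l))"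
    if "i < n" "j < n" for i j
  proof -
    have "(Q * D * Q\<^sup>T) $$ (i, j) = (\<Sum>k = 0..<n. Q $$ (i, k) * (\<Sum>l = 0..<n. D $$ (k, l) * Q $$ (j, l)))"
      using that Q D by (simp add: scalar_prod_def)
    also have "\<dots> = (\<Sum>k = 0..<n. Q $$ (i, k) * D $$ (k, k) * Q $$ (j, k))"
    proof (intro sum.cong refl)
      fix k assume "k \<in> {0..<n}"
      then have "(\<Sum>l = 0..<n. D $$ (k, l) * Q $$ (j, l)) =
          (\<Sum>l = 0..<n. if l = k then D $$ (k, k) * Q $$ (j, k) else 0)"
        using D unfolding diagonal_mat_def by (intro sum.cong) auto
      with \<open>k \<in> {0..<n}\<close> show "Q $$ (i, k) * (\<Sum>l = 0..<n. D $$ (k, l) * Q $$ (j, l)) =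
          Q $$ (i, k) * D $$ (k, k) * Q $$ (j, k)"
        by simp
    qed
    finally show ?thesis .
  qed
  have "(\<Sum>i = 0..<n. \<Sum>j = 0..<n. x i * (Q * D * Q\<^sup>T) $$ (i, j) * x j) =
      (\<Sum>i = 0..<n. \<Sum>j = 0..<n. \<Sum>l = 0..<n. D $$ (l, l) * ((Q $$ (i, l) * x i) * (Q $$ (j, l) * x j)))"
    by (intro sum.cong refl) (simp add: entry sum_distrib_left sum_distrib_right mult_ac)
  also have "\<dots> = (\<Sum>i = 0..<n. \<Sum>l = 0..<n. \<Sum>j = 0..<n. D $$ (l, l) * ((Q $$ (i, l) * x i) * (Q $$ (j, l) * x j)))"
    by (rule sum.cong[OF refl], rule sum.swap)
  also have "\<dots> = (\<Sum>l = 0..<n. \<Sum>i = 0..<n. \<Sum>j = 0..<n. D $$ (l, l) * ((Q $$ (i, l) * x i) * (Q $$ (j, l) * x j)))"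
    by (rule sum.swap)
  also have "\<dots> = (\<Sum>l = 0..<n. D $$ (l, l) * (\<Sum>i = 0..<n. Q $$ (i, l) * x i)\<^sup>2)"
    by (simp only: power2_eq_square sum_product) (simp only: sum_distrib_left)
  finally show ?thesis .
qed

lemma sum_squares_orthogonal:
  fixes x :: "nat \<Rightarrow> 'a :: comm_ring_1"
  assumes Q: "Q \<in> carrier_mat n n" "Q * Q\<^sup>T = 1\<^sub>m n"
  shows "(\<Sum>i = 0..<n. (x i)\<^sup>2) = (\<Sum>l = 0..<n. (\<Sum>i = 0..<n. Q $$ (i, l) * x i)\<^sup>2)"
proof -
  have "(\<Sum>i = 0..<n. (x i)\<^sup>2) = (\<Sum>i = 0..<n. \<Sum>j = 0..<n. x i * (Q * 1\<^sub>m n * Q\<^sup>T) $$ (i, j) * x j)"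
    using Q by (simp add: power2_eq_square if_distrib[of "\<lambda>d. _ * d * _"] cong: if_cong)
  also have "\<dots> = (\<Sum>l = 0..<n. (\<Sum>i = 0..<n. Q $$ (i, l) * x i)\<^sup>2)"
    using Q by (subst quadratic_form_mult_diagonal) (auto simp: diagonal_mat_def)
  finally show ?thesis .
qed

lemma quadratic_form_ge_orth_diagonal:
  fixes x :: "nat \<Rightarrow> real"
  assumes Q: "Q \<in> carrier_mat n n" "Q * Q\<^sup>T = 1\<^sub>m n" and D: "D \<in> carrier_mat n n" "diagonal_mat D"
    and low: "\<And>l. l < n \<Longrightarrow> D $$ (l, l) < a \<Longrightarrow> (\<Sum>i = 0..<n. Q $$ (i, l) * x i) = 0"
  shows "a * (\<Sum>i = 0..<n. (x i)\<^sup>2) \<le> (\<Sum>i = 0..<n. \<Sum>j = 0..<n. x i * (Q * D * Q\<^sup>T) $$ (i, j) * x j)"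
proof -
  define y where "y l = (\<Sum>i = 0..<n. Q $$ (i, l) * x i)" for l
  have "a * (y l)\<^sup>2 \<le> D $$ (l, l) * (y l)\<^sup>2" if "l < n" for l
    using that low[of l] by (cases "D $$ (l, l) < a") (auto simp: y_def intro: mult_right_mono)
  then have "a * (\<Sum>l = 0..<n. (y l)\<^sup>2) \<le> (\<Sum>l = 0..<n. D $$ (l, l) * (y l)\<^sup>2)"
    unfolding sum_distrib_left by (intro sum_mono) auto
  then show ?thesis
    unfolding quadratic_form_mult_diagonal[OF Q(1) D] sum_squares_orthogonal[OF Q, of x]
    by (simp add: y_def)
qed

lemma underdetermined_homogeneous_system_nontrivial:
  fixes c :: "'b \<Rightarrow> 'a \<Rightarrow> 'c :: field"
  assumes "finite J" "finite T" "card J < card T"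
  shows "\<exists>x. (\<forall>t. t \<notin> T \<longrightarrow> x t = 0) \<and> (\<exists>t\<in>T. x t \<noteq> 0) \<and>
    (\<forall>j\<in>J. (\<Sum>t\<in>T. c j t * x t) = 0)"
  using assms
proof (induction J arbitrary: T c rule: finite_induct)
  case empty
  then obtain t0 where "t0 \<in> T" by fastforce
  then show ?case by (intro exI[of _ "\<lambda>t. if t = t0 then 1 else 0"]) auto
next
  case (insert j0 J)
  show ?case
  proof (cases "\<forall>t\<in>T. c j0 t = 0")
    case True
    have "card J < card T" using insert by auto
    then obtain x where "\<forall>t. t \<notin> T \<longrightarrow> x t = 0" "\<exists>t\<in>T. x t \<noteq> 0"
        "\<forall>j\<in>J. (\<Sum>t\<in>T. c j t * x t) = 0"
      using insert.IH[of T c] insert.prems by blast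
    with True show ?thesis by (intro exI[of _ x]) auto
  next
    case False
    then obtain t0 where t0: "t0 \<in> T" "c j0 t0 \<noteq> 0" by auto
    \<comment> \<open>Gaussian elimination of \<open>x t0\<close> by means of equation \<open>j0\<close>\<close>
    define c' where "c' j t = c j t - c j t0 * c j0 t / c j0 t0" for j t
    have "card J < card (T - {t0})" using insert t0 by (simp add: card_Diff_singleton)
    then obtain x' where x': "\<forall>t. t \<notin> T - {t0} \<longrightarrow> x' t = 0" "\<exists>t\<in>T - {t0}. x' t \<noteq> 0"
        "\<forall>j\<in>J. (\<Sum>t\<in>T - {t0}. c' j t * x' t) = 0"
      using insert.IH[of "T - {t0}" c'] insert.prems by blast
    define s where "s = (\<Sum>t\<in>T - {t0}. c j0 t * x' t)"
    define x where "x = x'(t0 := - s / c j0 t0)"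
    have split: "(\<Sum>t\<in>T. f t * x t) = f t0 * x t0 + (\<Sum>t\<in>T - {t0}. f t * x' t)" for f
      using t0 insert.prems by (simp add: sum.remove x_def)
    have "(\<Sum>t\<in>T. c j t * x t) = 0" if "j \<in> J" for j
    proof -
      have "0 = (\<Sum>t\<in>T - {t0}. c' j t * x' t)" using x'(3) that by auto
      also have "\<dots> = (\<Sum>t\<in>T - {t0}. c j t * x' t) - c j t0 / c j0 t0 * s"
        unfolding c'_def s_def sum_distrib_left sum_subtractf[symmetric]
        by (rule sum.cong) (auto simp: algebra_simps)
      finally show ?thesis unfolding split using t0 by (simp add: x_def)
    qed
    moreover have "(\<Sum>t\<in>T. c j0 t * x t) = 0"
      unfolding split s_def[symmetric] using t0 by (simp add: x_def)
    moreover have "\<forall>t. t \<notin> T \<longrightarrow> x t = 0" "\<exists>t\<in>T. x t \<noteq> 0"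
      using x'(1,2) t0 unfolding x_def by auto
    ultimately show ?thesis by (intro exI[of _ x]) auto
  qed
qed

theorem sum_order_char_poly_roots_le:
  fixes A :: "real mat" and a :: real
  assumes A: "A \<in> carrier_mat n n" "A\<^sup>T = A" and T: "T \<subseteq> {0..<n}"
    and quad: "\<And>x. (\<forall>i. i \<notin> T \<longrightarrow> x i = 0) \<Longrightarrow> (\<exists>i\<in>T. x i \<noteq> 0) \<Longrightarrow>
      (\<Sum>i = 0..<n. \<Sum>j = 0..<n. x i * A $$ (i, j) * x j) < a * (\<Sum>i = 0..<n. (x i)\<^sup>2)"
    and I: "\<And>z. z \<in> I \<Longrightarrow> a \<le> z"
  shows "(\<Sum>z\<in>{z. poly (char_poly A) z = 0 \<and> z \<in> I}. Polynomial.order z (char_poly A)) \<le> n - card T"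
proof -
  obtain Q D where QD: "Q \<in> carrier_mat n n" "D \<in> carrier_mat n n" "diagonal_mat D"
      "Q\<^sup>T * Q = 1\<^sub>m n" "A = Q * D * Q\<^sup>T"
    using real_symmetric_orthogonally_diagonalizable[OF A] unfolding orthogonally_diagonalizable_def by blast
  have QQT: "Q * Q\<^sup>T = 1\<^sub>m n"
    using mat_mult_left_right_inverse[of "Q\<^sup>T" n Q] QD by auto
  define J where "J = {l. l < n \<and> D $$ (l, l) < a}"
  have "(\<Sum>z\<in>{z. poly (char_poly A) z = 0 \<and> z \<in> I}. Polynomial.order z (char_poly A)) =
      card {l. l < n \<and> D $$ (l, l) \<in> I}"
    unfolding QD(5) char_poly_orth_diagonal[OF QD(1,4,2,3)]
    by (rule sum_order_roots_prod_linear_factors)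
  also have "\<dots> \<le> card ({0..<n} - J)"
    by (intro card_mono) (auto simp: J_def dest: I)
  also have "\<dots> = n - card J"
    by (simp add: J_def card_Diff_subset subset_eq)
  finally have count: "(\<Sum>z\<in>{z. poly (char_poly A) z = 0 \<and> z \<in> I}. Polynomial.order z (char_poly A))
      \<le> n - card J" .
  \<comment> \<open>a nonzero \<open>x\<close> supported on \<open>T\<close> without components along the eigenvalues below \<open>a\<close>
     would satisfy \<open>a |x|\<^sup>2 \<le> x\<^sup>T A x\<close>\<close>
  have "card T \<le> card J"
  proof (rule ccontr)
    assume "\<not> card T \<le> card J"
    moreover have "finite J" "finite T" using finite_subset[OF T] by (auto simp: J_def)
    ultimately obtain x where x: "\<forall>t. t \<notin> T \<longrightarrow> x t = 0" "\<exists>t\<in>T. x t \<noteq> 0"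
        "\<forall>j\<in>J. (\<Sum>t\<in>T. Q $$ (t, j) * x t) = 0"
      using underdetermined_homogeneous_system_nontrivial[of J T "\<lambda>j t. Q $$ (t, j)"]
      unfolding not_le by blast
    have "(\<Sum>i = 0..<n. Q $$ (i, l) * x i) = 0" if "l < n" "D $$ (l, l) < a" for l
    proof -
      have "(\<Sum>i = 0..<n. Q $$ (i, l) * x i) = (\<Sum>t\<in>T. Q $$ (t, l) * x t)"
        using T x(1) by (intro sum.mono_neutral_right) auto
      then show ?thesis using x(3) that by (simp add: J_def)
    qed
    then have "a * (\<Sum>i = 0..<n. (x i)\<^sup>2) \<le> (\<Sum>i = 0..<n. \<Sum>j = 0..<n. x i * A $$ (i, j) * x j)"
      unfolding QD(5) by (rule quadratic_form_ge_orth_diagonal[OF QD(1) QQT QD(2,3)])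
    with quad[OF x(1,2)] show False by simp
  qed
  with count show ?thesis by linarith
qed

section \<open>Energy of a path with a doubly weighted end\<close>

lemma square_diff_le: "(x - y)\<^sup>2 \<le> 2 * x\<^sup>2 + 2 * (y :: real)\<^sup>2"
proof -
  have "0 \<le> (x + y)\<^sup>2" by simp
  then show ?thesis by (simp add: power2_eq_square algebra_simps)
qed

lemma path_energy_right_le:
  fixes z :: "nat \<Rightarrow> real"
  shows "(\<Sum>l = a..<a + m. (z l - z (Suc l))\<^sup>2) + 2 * (z (a + m))\<^sup>2 \<le> 4 * (\<Sum>l = a..a + m. (z l)\<^sup>2)"
proof (induction m)
  case (Suc m)
  then show ?case using square_diff_le[of "z (a + m)" "z (Suc (a + m))"] by simp
qed simp

lemma path_energy_right_less:
  fixes z :: "nat \<Rightarrow> real"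
  assumes "\<exists>l\<in>{a..a + m}. z l \<noteq> 0"
  shows "(\<Sum>l = a..<a + m. (z l - z (Suc l))\<^sup>2) + 2 * (z (a + m))\<^sup>2 < 4 * (\<Sum>l = a..a + m. (z l)\<^sup>2)"
  using assms
proof (induction m)
  case (Suc m)
  show ?case
  proof (cases "\<exists>l\<in>{a..a + m}. z l \<noteq> 0")
    case True
    then show ?thesis using Suc.IH square_diff_le[of "z (a + m)" "z (Suc (a + m))"] by simp
  next
    case False
    then have "z (Suc (a + m)) \<noteq> 0" using Suc.prems by (auto simp: le_Suc_eq)
    moreover have "(\<Sum>l = a..<a + m. (z l - z (Suc l))\<^sup>2) = 0" "(\<Sum>l = a..a + m. (z l)\<^sup>2) = 0"
      "z (a + m) = 0"
      using False by (auto intro!: sum.neutral)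
    ultimately show ?thesis by simp
  qed
qed simp

lemma path_energy_left_le:
  fixes z :: "nat \<Rightarrow> real"
  shows "(\<Sum>l = a..<a + m. (z l - z (Suc l))\<^sup>2) + 2 * (z a)\<^sup>2 \<le> 4 * (\<Sum>l = a..a + m. (z l)\<^sup>2)"
proof (induction m arbitrary: a)
  case (Suc m)
  have "(\<Sum>l = a..<a + Suc m. (z l - z (Suc l))\<^sup>2) =
      (z a - z (Suc a))\<^sup>2 + (\<Sum>l = Suc a..<Suc a + m. (z l - z (Suc l))\<^sup>2)"
    by (simp add: sum.atLeast_Suc_lessThan)
  moreover have "(\<Sum>l = a..a + Suc m. (z l)\<^sup>2) = (z a)\<^sup>2 + (\<Sum>l = Suc a..Suc a + m. (z l)\<^sup>2)"
    by (simp add: sum.atLeast_Suc_atMost)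
  ultimately show ?case using Suc.IH[of "Suc a"] square_diff_le[of "z a" "z (Suc a)"] by simp
qed simp

lemma path_energy_left_less:
  fixes z :: "nat \<Rightarrow> real"
  assumes "\<exists>l\<in>{a..a + m}. z l \<noteq> 0"
  shows "(\<Sum>l = a..<a + m. (z l - z (Suc l))\<^sup>2) + 2 * (z a)\<^sup>2 < 4 * (\<Sum>l = a..a + m. (z l)\<^sup>2)"
  using assms
proof (induction m arbitrary: a)
  case (Suc m)
  have "(\<Sum>l = a..<a + Suc m. (z l - z (Suc l))\<^sup>2) =
      (z a - z (Suc a))\<^sup>2 + (\<Sum>l = Suc a..<Suc a + m. (z l - z (Suc l))\<^sup>2)"
    by (simp add: sum.atLeast_Suc_lessThan)
  moreover have "(\<Sum>l = a..a + Suc m. (z l)\<^sup>2) = (z a)\<^sup>2 + (\<Sum>l = Suc a..Suc a + m. (z l)\<^sup>2)"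
    by (simp add: sum.atLeast_Suc_atMost)
  moreover have "(z a - z (Suc a))\<^sup>2 + (\<Sum>l = Suc a..<Suc a + m. (z l - z (Suc l))\<^sup>2) + 2 * (z a)\<^sup>2
      < 4 * ((z a)\<^sup>2 + (\<Sum>l = Suc a..Suc a + m. (z l)\<^sup>2))"
  proof (cases "\<exists>l\<in>{Suc a..Suc a + m}. z l \<noteq> 0")
    case True
    then show ?thesis using Suc.IH[of "Suc a"] square_diff_le[of "z a" "z (Suc a)"] by simp
  next
    case False
    then have "z a \<noteq> 0" using Suc.prems by (force simp: Suc_le_eq le_less)
    moreover have "(\<Sum>l = Suc a..<Suc a + m. (z l - z (Suc l))\<^sup>2) = 0"
      "(\<Sum>l = Suc a..Suc a + m. (z l)\<^sup>2) = 0" "z (Suc a) = 0"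
      using False by (auto intro!: sum.neutral)
    ultimately show ?thesis by simp
  qed
  ultimately show ?case by simp
qed simp

lemma path_energy_less:
  fixes z :: "nat \<Rightarrow> real"
  assumes k: "k + 2 \<le> d" and zk: "z (k + 1) = 0" and nz: "\<exists>l\<le>d. z l \<noteq> 0"
  shows "(\<Sum>l = 0..<d. (z l - z (Suc l))\<^sup>2) + (z k)\<^sup>2 + (z (k + 2))\<^sup>2 < 4 * (\<Sum>l = 0..d. (z l)\<^sup>2)"
proof -
  define m where "m = d - (k + 2)"
  have d: "d = (k + 2) + m" unfolding m_def using k by simp
  \<comment> \<open>cutting the path at the zero \<open>z (k + 1)\<close> leaves two segments, each with one heavy end\<close>
  define L where "L = (\<Sum>l = 0..<0 + k. (z l - z (Suc l))\<^sup>2) + 2 * (z (0 + k))\<^sup>2"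
  define R where "R = (\<Sum>l = k + 2..<(k + 2) + m. (z l - z (Suc l))\<^sup>2) + 2 * (z (k + 2))\<^sup>2"
  have "(\<Sum>l = 0..<d. (z l - z (Suc l))\<^sup>2) =
      (\<Sum>l = 0..<k. (z l - z (Suc l))\<^sup>2) + (\<Sum>l = k..<k + 2. (z l - z (Suc l))\<^sup>2) +
      (\<Sum>l = k + 2..<d. (z l - z (Suc l))\<^sup>2)"
    by (simp only: sum.atLeastLessThan_concat k le_add1 le0)
  then have lhs: "(\<Sum>l = 0..<d. (z l - z (Suc l))\<^sup>2) + (z k)\<^sup>2 + (z (k + 2))\<^sup>2 = L + R"
    unfolding L_def R_def using zk d by (simp add: numeral_2_eq_2)
  have "(\<Sum>l = 0..d. (z l)\<^sup>2) = (\<Sum>l = 0..k + 1. (z l)\<^sup>2) + (\<Sum>l = k + 1 + 1..d. (z l)\<^sup>2)"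
    using sum.ub_add_nat[of 0 "k + 1" "\<lambda>l. (z l)\<^sup>2" "m + 1"] d by simp
  also have "\<dots> = (\<Sum>l = 0..0 + k. (z l)\<^sup>2) + (\<Sum>l = k + 2..(k + 2) + m. (z l)\<^sup>2)"
    using zk d by simp
  finally have "(\<Sum>l = 0..d. (z l)\<^sup>2) =
      (\<Sum>l = 0..0 + k. (z l)\<^sup>2) + (\<Sum>l = k + 2..(k + 2) + m. (z l)\<^sup>2)" .
  moreover have "L \<le> 4 * (\<Sum>l = 0..0 + k. (z l)\<^sup>2)" "R \<le> 4 * (\<Sum>l = k + 2..(k + 2) + m. (z l)\<^sup>2)"
    unfolding L_def R_def by (rule path_energy_right_le path_energy_left_le)+
  moreover have "L < 4 * (\<Sum>l = 0..0 + k. (z l)\<^sup>2) \<or> R < 4 * (\<Sum>l = k + 2..(k + 2) + m. (z l)\<^sup>2)"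
  proof -
    obtain l where l: "l \<le> d" "z l \<noteq> 0" using nz by blast
    moreover have "l \<noteq> k + 1" using zk l by auto
    ultimately have "l \<in> {0..0 + k} \<or> l \<in> {k + 2..(k + 2) + m}" using d by auto
    then show ?thesis
    proof
      assume "l \<in> {0..0 + k}"
      then show ?thesis unfolding L_def using path_energy_right_less l(2) by blast
    next
      assume "l \<in> {k + 2..(k + 2) + m}"
      then show ?thesis unfolding R_def using path_energy_left_less l(2) by blast
    qed
  qed
  ultimately show ?thesis unfolding lhs by linarith
qed

section \<open>Geodesics\<close>

lemma relpowp_path_segment:
  assumes "\<forall>i<d. E (f i) (f (Suc i))" "i \<le> j" "j \<le> d"
  shows "(E ^^ (j - i)) (f i) (f j)"
  using assms by (subst relpowp_fun_conv) (intro exI[of _ "\<lambda>t. f (i + t)"], auto)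

definition geodesic :: "('a \<Rightarrow> 'a \<Rightarrow> bool) \<Rightarrow> (nat \<Rightarrow> 'a) \<Rightarrow> nat \<Rightarrow> bool" where
  "geodesic E v d \<longleftrightarrow> (\<forall>i<d. E (v i) (v (Suc i))) \<and>
     (\<forall>i j L. i \<le> j \<longrightarrow> j \<le> d \<longrightarrow> (E ^^ L) (v i) (v j) \<longrightarrow> j - i \<le> L)"

lemma diameter_geodesic_exists:
  assumes sg: "simple_graph n E" and n: "0 < n" and con: "graph_connected n E"
    and diam: "diameter n E = d"
  obtains v where "geodesic E v d" "\<forall>l\<le>d. v l < n"
proof -
  let ?D = "{graph_dist E u v | u v. u < n \<and> v < n}"
  have "finite ?D"
    by (rule finite_subset[of _ "(\<lambda>(u, v). graph_dist E u v) ` ({0..<n} \<times> {0..<n})"]) auto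
  moreover have "?D \<noteq> {}" using n by auto
  ultimately have "d \<in> ?D" using Max_in diam unfolding diameter_def by blast
  then obtain u0 ud where u: "u0 < n" "ud < n" "graph_dist E u0 ud = d"
    by blast
  then have min: "d \<le> k" if "(E ^^ k) u0 ud" for k
    using that unfolding graph_dist_def by (metis Least_le)
  have "(E ^^ d) u0 ud"
    using con u unfolding graph_connected_def graph_dist_def by (metis LeastI)
  then obtain v where v: "v 0 = u0" "v d = ud" "\<forall>i<d. E (v i) (v (Suc i))"
    unfolding relpowp_fun_conv by blast
  have "j - i \<le> L" if "i \<le> j" "j \<le> d" "(E ^^ L) (v i) (v j)" for i j L
  proof -
    have "(E ^^ (i - 0)) u0 (v i)" "(E ^^ (d - j)) (v j) ud"
      using relpowp_path_segment[of d E v 0 i] relpowp_path_segment[of d E v j d] that v by auto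
    then have "(E ^^ (i - 0 + L + (d - j))) u0 ud"
      unfolding relpowp_add using that(3) by (intro relcomppI)
    then show ?thesis using min that by fastforce
  qed
  moreover have "v l < n" if "l \<le> d" for l
    using that v(2,3) u(2) sg unfolding simple_graph_def
    by (cases "l < d") auto
  ultimately show thesis using that v(3) unfolding geodesic_def by blast
qed

lemma geodesic_inj_on:
  assumes "geodesic E v d"
  shows "inj_on v {0..d}"
proof (rule inj_onI)
  fix i j assume "i \<in> {0..d}" "j \<in> {0..d}" "v i = v j"
  then have "(E ^^ 0) (v i) (v j)" "(E ^^ 0) (v j) (v i)" "i \<le> d" "j \<le> d" by auto
  then have "j - i \<le> 0" "i - j \<le> 0"
    using assms unfolding geodesic_def by (metis nat_le_linear diff_is_0_eq)+
  then show "i = j" by simp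
qed

lemma geodesic_adjacent_iff:
  assumes sg: "simple_graph n E" and v: "geodesic E v d" and "l \<le> d" "m \<le> d"
  shows "E (v l) (v m) \<longleftrightarrow> m = l + 1 \<or> l = m + 1"
proof
  assume e: "E (v l) (v m)"
  then have "(E ^^ 1) (v l) (v m)" "(E ^^ 1) (v m) (v l)" "l \<noteq> m"
    using sg unfolding simple_graph_def by auto
  moreover have "m - l \<le> 1" if "l \<le> m" "(E ^^ 1) (v l) (v m)"
    using v that assms(4) unfolding geodesic_def by blast
  moreover have "l - m \<le> 1" if "m \<le> l" "(E ^^ 1) (v m) (v l)"
    using v that assms(3) unfolding geodesic_def by blast
  ultimately show "m = l + 1 \<or> l = m + 1"
    by (cases "l \<le> m") auto
next
  assume "m = l + 1 \<or> l = m + 1"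
  then show "E (v l) (v m)"
    using v assms(3,4) sg unfolding geodesic_def simple_graph_def by auto
qed

lemma geodesic_common_neighbour:
  assumes sg: "simple_graph n E" and v: "geodesic E v d"
    and "E w (v i)" "E w (v j)" "i \<le> j" "j \<le> d"
  shows "j \<le> i + 2"
proof -
  have "E (v i) w" using assms(3) sg unfolding simple_graph_def by blast
  then have "(E ^^ 2) (v i) (v j)"
    using assms(4) by (auto simp: numeral_2_eq_2 relpowp_Suc_I2)
  then show ?thesis using v assms(5,6) unfolding geodesic_def by fastforce
qed

lemma geodesic_neighbours_in_window:
  assumes sg: "simple_graph n E" and v: "geodesic E v d" and d: "2 \<le> d"
  obtains k where "k + 2 \<le> d" "\<forall>l\<le>d. E w (v l) \<longrightarrow> l = k \<or> l = k + 1 \<or> l = k + 2"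
proof (cases "\<exists>l\<le>d. E w (v l)")
  case False
  then show thesis using that[of 0] d by auto
next
  case True
  define i where "i = (LEAST l. l \<le> d \<and> E w (v l))"
  have i: "i \<le> d" "E w (v i)" "\<And>l. l \<le> d \<Longrightarrow> E w (v l) \<Longrightarrow> i \<le> l"
    using True LeastI_ex[of "\<lambda>l. l \<le> d \<and> E w (v l)"] Least_le[of "\<lambda>l. l \<le> d \<and> E w (v l)"]
    unfolding i_def by auto
  show thesis
  proof (rule that[of "min i (d - 2)"])
    show "min i (d - 2) + 2 \<le> d" using d by simp
    show "\<forall>l\<le>d. E w (v l) \<longrightarrow> l = min i (d - 2) \<or> l = min i (d - 2) + 1 \<or> l = min i (d - 2) + 2"
      using i geodesic_common_neighbour[OF sg v, of w i] d by fastforce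
  qed
qed

lemma geodesic_misses_vertex:
  assumes sg: "simple_graph n E" and v: "geodesic E v d" "\<forall>l\<le>d. v l < n"
    and np: "\<not> iso_to_path n E (d + 1)"
  obtains w where "w < n" "w \<notin> v ` {0..d}"
proof -
  have "\<exists>w<n. w \<notin> v ` {0..d}"
  proof (rule ccontr)
    assume "\<not> ?thesis"
    with v(2) have "bij_betw v {0..d} {0..<n}"
      unfolding bij_betw_def using geodesic_inj_on[OF v(1)] by fastforce
    define f where "f = inv_into {0..d} v"
    have f: "bij_betw f {0..<n} {0..d}"
      unfolding f_def by (rule bij_betw_inv_into[OF \<open>bij_betw v {0..d} {0..<n}\<close>])
    then have "bij_betw f {0..<n} {0..<d + 1}"
      by (simp add: atLeastLessThanSuc_atLeastAtMost)
    moreover have "f a \<le> d" "v (f a) = a" if "a < n" for a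
      using that f \<open>bij_betw v {0..d} {0..<n}\<close> unfolding f_def
      by (auto simp: bij_betw_def f_inv_into_f)
    then have "E a b \<longleftrightarrow> f a + 1 = f b \<or> f b + 1 = f a" if "a < n" "b < n" for a b
      using geodesic_adjacent_iff[OF sg v(1), of "f a" "f b"] that by auto
    ultimately show False using np unfolding iso_to_path_def by blast
  qed
  then show thesis using that by blast
qed

section \<open>The Laplacian form near a geodesic\<close>

lemma laplacian_carrier: "laplacian n E \<in> carrier_mat n n"
  unfolding laplacian_def by simp

lemma transpose_laplacian:
  assumes "simple_graph n E"
  shows "(laplacian n E)\<^sup>T = laplacian n E"
  using assms unfolding laplacian_def simple_graph_def by (intro eq_matI) auto

lemma laplacian_quadratic_form:
  assumes sg: "simple_graph n E"
  shows "(\<Sum>i = 0..<n. \<Sum>j = 0..<n. x i * laplacian n E $$ (i, j) * x j) =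
    (\<Sum>i = 0..<n. \<Sum>j = 0..<n. if E i j then x i * (x i - x j) else (0 :: real))"
proof (rule sum.cong[OF refl])
  fix i assume "i \<in> {0..<n}"
  then have i: "i < n" by simp
  have deg: "real (degree n E i) = (\<Sum>j = 0..<n. if E i j then 1 else 0)"
    unfolding degree_def by (simp add: sum.If_cases Int_def conj_commute)
  have "(\<Sum>j = 0..<n. x i * laplacian n E $$ (i, j) * x j) =
      (\<Sum>j = 0..<n. (if j = i then x i * x i * real (degree n E i) else 0) + (if E i j then - (x i * x j) else 0))"
    using i sg unfolding laplacian_def simple_graph_def by (intro sum.cong refl) auto
  also have "\<dots> = x i * x i * real (degree n E i) + (\<Sum>j = 0..<n. if E i j then - (x i * x j) else 0)"
    using i by (simp add: sum.distrib)
  also have "\<dots> = (\<Sum>j = 0..<n. if E i j then x i * (x i - x j) else 0)"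
    unfolding deg sum_distrib_left sum.distrib[symmetric] by (intro sum.cong refl) (simp add: algebra_simps)
  finally show "(\<Sum>j = 0..<n. x i * laplacian n E $$ (i, j) * x j) =
      (\<Sum>j = 0..<n. if E i j then x i * (x i - x j) else 0)" .
qed

lemma sum_adjacent_pairs_eq:
  fixes z :: "nat \<Rightarrow> real"
  shows "(\<Sum>l = 0..d. \<Sum>m = 0..d. if m = l + 1 \<or> l = m + 1 then z l * (z l - z m) else 0) =
    (\<Sum>l = 0..<d. (z l - z (Suc l))\<^sup>2)"
proof (induction d)
  case (Suc d)
  have "(\<Sum>l = 0..d. if Suc d = l + 1 \<or> l = Suc d + 1 then z l * (z l - z (Suc d)) else 0) =
      (\<Sum>l = 0..d. if l = d then z d * (z d - z (Suc d)) else 0)"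
    by (rule sum.cong) auto
  moreover have "(\<Sum>m = 0..d. if m = Suc d + 1 \<or> Suc d = m + 1 then z (Suc d) * (z (Suc d) - z m) else 0) =
      (\<Sum>m = 0..d. if m = d then z (Suc d) * (z (Suc d) - z d) else 0)"
    by (rule sum.cong) auto
  ultimately show ?case
    using Suc.IH by (simp add: sum.distrib power2_eq_square algebra_simps)
qed simp

lemma edge_form_supported_on_geodesic:
  fixes x :: "nat \<Rightarrow> real"
  assumes sg: "simple_graph n E" and v: "geodesic E v d" "\<forall>l\<le>d. v l < n"
    and x: "\<forall>i. i \<notin> v ` {0..d} \<longrightarrow> x i = 0"
  shows "(\<Sum>i = 0..<n. \<Sum>j = 0..<n. if E i j then x i * (x i - x j) else 0) =
    (\<Sum>l = 0..<d. (x (v l) - x (v (Suc l)))\<^sup>2) +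
    (\<Sum>j\<in>{0..<n} - v ` {0..d}. \<Sum>l = 0..d. if E (v l) j then (x (v l))\<^sup>2 else 0)"
proof -
  let ?P = "v ` {0..d}" and ?S = "{0..<n} - v ` {0..d}"
  let ?h = "\<lambda>i j. if E i j then x i * (x i - x j) else 0"
  have P: "?P \<subseteq> {0..<n}" using v(2) by auto
  have reindex: "(\<Sum>i\<in>?P. f i) = (\<Sum>l = 0..d. f (v l))" for f :: "nat \<Rightarrow> real"
    using sum.reindex[OF geodesic_inj_on[OF v(1)]] by simp
  have "(\<Sum>i = 0..<n. \<Sum>j = 0..<n. ?h i j) = (\<Sum>i\<in>?P. \<Sum>j = 0..<n. ?h i j)"
  proof (rule sum.mono_neutral_right)
    show "\<forall>i\<in>{0..<n} - ?P. (\<Sum>j = 0..<n. ?h i j) = 0"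
    proof
      fix i assume "i \<in> {0..<n} - ?P"
      then have "x i = 0" using x by blast
      then show "(\<Sum>j = 0..<n. ?h i j) = 0" by (intro sum.neutral) simp
    qed
  qed (use P in auto)
  also have "\<dots> = (\<Sum>i\<in>?P. (\<Sum>j\<in>?P. ?h i j) + (\<Sum>j\<in>?S. if E i j then (x i)\<^sup>2 else 0))"
  proof (rule sum.cong[OF refl])
    fix i
    have "(\<Sum>j = 0..<n. ?h i j) = (\<Sum>j\<in>?P. ?h i j) + (\<Sum>j\<in>?S. ?h i j)"
      unfolding sum.subset_diff[OF P finite_atLeastLessThan] by (rule add.commute)
    also have "(\<Sum>j\<in>?S. ?h i j) = (\<Sum>j\<in>?S. if E i j then (x i)\<^sup>2 else 0)"
      using x by (intro sum.cong refl) (auto simp: power2_eq_square)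
    finally show "(\<Sum>j = 0..<n. ?h i j) = (\<Sum>j\<in>?P. ?h i j) + (\<Sum>j\<in>?S. if E i j then (x i)\<^sup>2 else 0)" .
  qed
  also have "\<dots> = (\<Sum>l = 0..<d. (x (v l) - x (v (Suc l)))\<^sup>2) +
      (\<Sum>j\<in>?S. \<Sum>l = 0..d. if E (v l) j then (x (v l))\<^sup>2 else 0)"
  proof -
    have "(\<Sum>i\<in>?P. \<Sum>j\<in>?P. ?h i j) =
        (\<Sum>l = 0..d. \<Sum>m = 0..d. if m = l + 1 \<or> l = m + 1 then x (v l) * (x (v l) - x (v m)) else 0)"
      unfolding reindex using geodesic_adjacent_iff[OF sg v(1)] by (intro sum.cong refl) auto
    also have "\<dots> = (\<Sum>l = 0..<d. (x (v l) - x (v (Suc l)))\<^sup>2)"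
      by (rule sum_adjacent_pairs_eq)
    finally show ?thesis
      unfolding sum.distrib reindex by (subst (2) sum.swap) simp
  qed
  finally show ?thesis .
qed

lemma off_geodesic_edges_le:
  fixes z :: "nat \<Rightarrow> real"
  assumes sg: "simple_graph n E" and v: "geodesic E v d" "\<forall>l\<le>d. v l < n" and k: "k + 2 \<le> d"
    and w: "w < n" "w \<notin> v ` {0..d}" "\<forall>l\<le>d. E w (v l) \<longrightarrow> l = k \<or> l = k + 1 \<or> l = k + 2"
    and zk: "z (k + 1) = 0"
  shows "(\<Sum>j\<in>{0..<n} - v ` {0..d}. \<Sum>l = 0..d. if E (v l) j then (z l)\<^sup>2 else 0)
    \<le> (z k)\<^sup>2 + (z (k + 2))\<^sup>2 + (real n - real d - 2) * (\<Sum>l = 0..d. (z l)\<^sup>2)"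
proof -
  let ?S = "{0..<n} - v ` {0..d}"
  define Z where "Z = (\<Sum>l = 0..d. (z l)\<^sup>2)"
  define g where "g j = (\<Sum>l = 0..d. if E (v l) j then (z l)\<^sup>2 else 0)" for j
  have P: "v ` {0..d} \<subseteq> {0..<n}" using v(2) by auto
  have "card ?S = n - (d + 1)"
    using card_Diff_subset[OF _ P] card_image[OF geodesic_inj_on[OF v(1)]]
    by (simp add: finite_subset[OF P])
  moreover have "w \<in> ?S" using w by simp
  moreover then have "card ?S > 0" using card_gt_0_iff by blast
  ultimately have card: "real (card (?S - {w})) = real n - real d - 2"
    by (simp add: of_nat_diff)
  \<comment> \<open>a vertex off the path sees at most all of \<open>Z\<close>; the vertex \<open>w\<close> sees only
     \<open>z k\<close> and \<open>z (k + 2)\<close>\<close>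
  have "g j \<le> Z" for j
    unfolding g_def Z_def by (intro sum_mono) auto
  then have "(\<Sum>j\<in>?S - {w}. g j) \<le> real (card (?S - {w})) * Z"
    using sum_bounded_above[of "?S - {w}" g Z] by simp
  moreover have "g w \<le> (\<Sum>l\<in>{k, k + 1, k + 2}. (z l)\<^sup>2)"
    unfolding g_def using k w(3) sg unfolding simple_graph_def
    by (subst sum.mono_neutral_left[of "{0..d}" "{k, k + 1, k + 2}", symmetric]) (auto intro!: sum_mono)
  moreover have "(\<Sum>j\<in>?S. g j) = g w + (\<Sum>j\<in>?S - {w}. g j)"
    using \<open>w \<in> ?S\<close> by (simp add: sum.remove)
  ultimately show ?thesis
    unfolding g_def[symmetric] Z_def[symmetric] card using zk by simp
qed

lemma laplacian_form_less:
  fixes x :: "nat \<Rightarrow> real"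
  assumes sg: "simple_graph n E" and v: "geodesic E v d" "\<forall>l\<le>d. v l < n" and k: "k + 2 \<le> d"
    and w: "w < n" "w \<notin> v ` {0..d}" "\<forall>l\<le>d. E w (v l) \<longrightarrow> l = k \<or> l = k + 1 \<or> l = k + 2"
    and x: "\<forall>i. i \<notin> v ` ({0..d} - {k + 1}) \<longrightarrow> x i = 0"
      "\<exists>i\<in>v ` ({0..d} - {k + 1}). x i \<noteq> 0"
  shows "(\<Sum>i = 0..<n. \<Sum>j = 0..<n. x i * laplacian n E $$ (i, j) * x j)
    < (real n - real d + 2) * (\<Sum>i = 0..<n. (x i)\<^sup>2)"
proof -
  let ?P = "v ` {0..d}"
  define z where "z l = x (v l)" for l
  have xP: "\<forall>i. i \<notin> ?P \<longrightarrow> x i = 0" using x(1) by blast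
  have "(\<Sum>i = 0..<n. (x i)\<^sup>2) = (\<Sum>i\<in>?P. (x i)\<^sup>2)"
    using v(2) xP by (intro sum.mono_neutral_right) auto
  also have "\<dots> = (\<Sum>l = 0..d. (z l)\<^sup>2)"
    unfolding z_def using sum.reindex[OF geodesic_inj_on[OF v(1)]] by simp
  finally have norm: "(\<Sum>i = 0..<n. (x i)\<^sup>2) = (\<Sum>l = 0..d. (z l)\<^sup>2)" .
  have "v (k + 1) \<notin> v ` ({0..d} - {k + 1})"
    using geodesic_inj_on[OF v(1)] k by (auto dest: inj_onD)
  then have zk: "z (k + 1) = 0" unfolding z_def using x(1) by blast
  moreover have "\<exists>l\<le>d. z l \<noteq> 0" using x(2) unfolding z_def by auto
  ultimately have "(\<Sum>l = 0..<d. (z l - z (Suc l))\<^sup>2) + (z k)\<^sup>2 + (z (k + 2))\<^sup>2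
      < 4 * (\<Sum>l = 0..d. (z l)\<^sup>2)"
    by (rule path_energy_less[OF k])
  moreover have "(\<Sum>i = 0..<n. \<Sum>j = 0..<n. x i * laplacian n E $$ (i, j) * x j) =
      (\<Sum>l = 0..<d. (z l - z (Suc l))\<^sup>2) +
      (\<Sum>j\<in>{0..<n} - ?P. \<Sum>l = 0..d. if E (v l) j then (z l)\<^sup>2 else 0)"
    unfolding laplacian_quadratic_form[OF sg] edge_form_supported_on_geodesic[OF sg v xP] z_def ..
  ultimately show ?thesis
    using off_geodesic_edges_le[where z = z, OF sg v k w zk] unfolding norm by (simp add: algebra_simps)
qed

theorem theorem3p1:
  fixes n d :: nat and E :: "nat \<Rightarrow> nat \<Rightarrow> bool"
  assumes "simple_graph n E" and "0 < n"
    and "graph_connected n E"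
    and "diameter n E = d" and "d \<ge> 2"
    and "\<not> iso_to_path n E (d + 1)"
  shows "lap_eig_count n E {real n - real d + 2 .. real n} \<le> n - d"
proof -
  obtain v where v: "geodesic E v d" "\<forall>l\<le>d. v l < n"
    using diameter_geodesic_exists[OF assms(1-4)] .
  obtain w where w: "w < n" "w \<notin> v ` {0..d}"
    using geodesic_misses_vertex[OF assms(1) v assms(6)] .
  obtain k where k: "k + 2 \<le> d" "\<forall>l\<le>d. E w (v l) \<longrightarrow> l = k \<or> l = k + 1 \<or> l = k + 2"
    using geodesic_neighbours_in_window[OF assms(1) v(1) assms(5)] .
  define T where "T = v ` ({0..d} - {k + 1})"
  have "card T = d"
    unfolding T_def using k(1)
    by (subst card_image) (auto intro: inj_on_subset[OF geodesic_inj_on[OF v(1)]])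
  have T: "T \<subseteq> {0..<n}" unfolding T_def using v(2) by auto
  have "lap_eig_count n E {real n - real d + 2 .. real n} \<le> n - card T"
    unfolding lap_eig_count_def
  proof (rule sum_order_char_poly_roots_le[OF laplacian_carrier transpose_laplacian[OF assms(1)] T])
    show "(\<Sum>i = 0..<n. \<Sum>j = 0..<n. x i * laplacian n E $$ (i, j) * x j)
        < (real n - real d + 2) * (\<Sum>i = 0..<n. (x i)\<^sup>2)"
      if "\<forall>i. i \<notin> T \<longrightarrow> x i = 0" "\<exists>i\<in>T. x i \<noteq> 0" for x
      using laplacian_form_less[OF assms(1) v k(1) w k(2)] that unfolding T_def by blast
  qed auto
  with \<open>card T = d\<close> show ?thesis by simp
qed

end
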